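(* Let $G$ be a finite group and $T$ a $G$-transfer system. Then $\mathrm{Hull}(T)=T_c$ if and only if $T$ is connected (has exactly one connected component).
   Context: A $G$-transfer system is a partial order $\to$ on the set of subgroups of $G$ such that: $K\to H$ implies $K\le H$; $H\to H$ for all $H$; $L\to K$ and $K\to H$ imply $L\to H$; $K\to H$ implies $K\cap L\to H\cap L$ for every $L\le G$; $K\to H$ implies $gKg^{-1}\to gHg^{-1}$ for all $g\in G$. Connected components are those of the underlying undirected graph on the subgroups of $G$ with edges $K\to H$. $T_c$ denotes the complete transfer system, containing $K\to H$ for all $K\le H\le G$. A transfer system is saturated if whenever $L\le K\le H$ and $L\to H$ is in it, then $K\to H$ is in it; $\mathrm{Hull}(T)$ is the smallest saturated $G$-transfer system containing $T$. *)

theory Defs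
  imports "HOL-Algebra.Group"
begin

text \<open>A relation on subsets of the carrier; R K H stands for K \<rightarrow> H.\<close>

definition conjugate_set :: "('a, 'b) monoid_scheme \<Rightarrow> 'a \<Rightarrow> 'a set \<Rightarrow> 'a set" where
  "conjugate_set G g K = (\<lambda>k. g \<otimes>\<^bsub>G\<^esub> k \<otimes>\<^bsub>G\<^esub> inv\<^bsub>G\<^esub> g) ` K"

definition transfer_system :: "('a, 'b) monoid_scheme \<Rightarrow> ('a set \<Rightarrow> 'a set \<Rightarrow> bool) \<Rightarrow> bool" where
  "transfer_system G R \<longleftrightarrow>
     (\<forall>K H. R K H \<longrightarrow> subgroup K G \<and> subgroup H G \<and> K \<subseteq> H) \<and>
     (\<forall>H. subgroup H G \<longrightarrow> R H H) \<and>
     (\<forall>K H. R K H \<and> R H K \<longrightarrow> K = H) \<and>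
     (\<forall>L K H. R L K \<and> R K H \<longrightarrow> R L H) \<and>
     (\<forall>K H L. R K H \<and> subgroup L G \<longrightarrow> R (K \<inter> L) (H \<inter> L)) \<and>
     (\<forall>K H g. R K H \<and> g \<in> carrier G \<longrightarrow> R (conjugate_set G g K) (conjugate_set G g H))"

definition complete_transfer :: "('a, 'b) monoid_scheme \<Rightarrow> 'a set \<Rightarrow> 'a set \<Rightarrow> bool" where
  "complete_transfer G K H \<longleftrightarrow> subgroup K G \<and> subgroup H G \<and> K \<subseteq> H"

definition saturated :: "('a, 'b) monoid_scheme \<Rightarrow> ('a set \<Rightarrow> 'a set \<Rightarrow> bool) \<Rightarrow> bool" where
  "saturated G R \<longleftrightarrow>
     (\<forall>L K H. subgroup L G \<and> subgroup K G \<and> subgroup H G \<and> L \<subseteq> K \<and> K \<subseteq> H \<and> R L H \<longrightarrow> R K H)"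

definition hull :: "('a, 'b) monoid_scheme \<Rightarrow> ('a set \<Rightarrow> 'a set \<Rightarrow> bool) \<Rightarrow> 'a set \<Rightarrow> 'a set \<Rightarrow> bool" where
  "hull G R K H \<longleftrightarrow>
     (\<forall>S. transfer_system G S \<and> saturated G S \<and> (\<forall>A B. R A B \<longrightarrow> S A B) \<longrightarrow> S K H)"

text \<open>Connected: the underlying undirected graph on subgroups has exactly one component
  (the vertex set is nonempty, so this means any two subgroups are linked).\<close>
definition connected_transfer :: "('a, 'b) monoid_scheme \<Rightarrow> ('a set \<Rightarrow> 'a set \<Rightarrow> bool) \<Rightarrow> bool" where
  "connected_transfer G R \<longleftrightarrow>
     (\<forall>K H. subgroup K G \<and> subgroup H G \<longrightarrow> (\<lambda>x y. R x y \<or> R y x)\<^sup>*\<^sup>* K H)"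

end

theory Submission
  imports Defs "HOL-Algebra.Group_Action"
begin

text \<open>
  Saturated transfer systems are insensitive to connected components: restricting a path
  from K to H along T-edges to a subgroup L \<le> H stays inside a component, so the relation
  "K \<le> H and K, H lie in the same component of T" is itself a saturated transfer system
  containing T. Hence Hull(T) only relates subgroups in one component, and
  Hull(T) = T_c forces every K to be linked to G. Conversely, in any saturated S \<supseteq> T
  the set of K with K \<rightarrow> G is closed under T-edges in both directions (by saturation and by
  transitivity), so connectivity gives K \<rightarrow> G for all K; intersecting with H yields K \<rightarrow> H.
\<close>

lemma conjugate_set_eq_cosets:
  "conjugate_set G g K = g <#\<^bsub>G\<^esub> K #>\<^bsub>G\<^esub> inv\<^bsub>G\<^esub> g"
  unfolding conjugate_set_def l_coset_def r_coset_def by auto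

lemma subgroup_conjugate_set:
  assumes "group G" "subgroup K G" "g \<in> carrier G"
  shows "subgroup (conjugate_set G g K) G"
  using group.subgroup_conjugation_is_surj1[OF assms(1) group.inv_closed[OF assms(1,3)] assms(2)]
  by (simp add: conjugate_set_eq_cosets group.inv_inv[OF assms(1,3)])

lemma conjugate_set_mono: "K \<subseteq> H \<Longrightarrow> conjugate_set G g K \<subseteq> conjugate_set G g H"
  unfolding conjugate_set_def by blast

lemma transfer_systemI:
  assumes "\<And>K H. R K H \<Longrightarrow> subgroup K G \<and> subgroup H G \<and> K \<subseteq> H"
    and "\<And>H. subgroup H G \<Longrightarrow> R H H"
    and "\<And>K H. R K H \<Longrightarrow> R H K \<Longrightarrow> K = H"
    and "\<And>L K H. R L K \<Longrightarrow> R K H \<Longrightarrow> R L H"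
    and "\<And>K H L. R K H \<Longrightarrow> subgroup L G \<Longrightarrow> R (K \<inter> L) (H \<inter> L)"
    and "\<And>K H g. R K H \<Longrightarrow> g \<in> carrier G \<Longrightarrow> R (conjugate_set G g K) (conjugate_set G g H)"
  shows "transfer_system G R"
  unfolding transfer_system_def using assms by (intro conjI allI impI; (elim conjE)?; metis)

lemma transfer_system_subgroups:
  "transfer_system G R \<Longrightarrow> R K H \<Longrightarrow> subgroup K G \<and> subgroup H G \<and> K \<subseteq> H"
  unfolding transfer_system_def by meson

lemma transfer_system_refl: "transfer_system G R \<Longrightarrow> subgroup H G \<Longrightarrow> R H H"
  unfolding transfer_system_def by meson

lemma transfer_system_trans: "transfer_system G R \<Longrightarrow> R L K \<Longrightarrow> R K H \<Longrightarrow> R L H"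
  unfolding transfer_system_def by meson

lemma transfer_system_restrict:
  "transfer_system G R \<Longrightarrow> R K H \<Longrightarrow> subgroup L G \<Longrightarrow> R (K \<inter> L) (H \<inter> L)"
  unfolding transfer_system_def by meson

lemma transfer_system_conjugate:
  "transfer_system G R \<Longrightarrow> R K H \<Longrightarrow> g \<in> carrier G
    \<Longrightarrow> R (conjugate_set G g K) (conjugate_set G g H)"
  unfolding transfer_system_def by meson

lemma transfer_system_le_complete:
  "transfer_system G R \<Longrightarrow> R K H \<Longrightarrow> complete_transfer G K H"
  unfolding complete_transfer_def by (rule transfer_system_subgroups)

lemma saturatedI:
  "(\<And>L K H. subgroup L G \<Longrightarrow> subgroup K G \<Longrightarrow> subgroup H G \<Longrightarrow> L \<subseteq> K \<Longrightarrow> K \<subseteq> H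
      \<Longrightarrow> R L H \<Longrightarrow> R K H) \<Longrightarrow> saturated G R"
  unfolding saturated_def by blast

lemma saturatedD:
  "saturated G R \<Longrightarrow> subgroup L G \<Longrightarrow> subgroup K G \<Longrightarrow> subgroup H G \<Longrightarrow> L \<subseteq> K \<Longrightarrow> K \<subseteq> H
    \<Longrightarrow> R L H \<Longrightarrow> R K H"
  unfolding saturated_def by blast

lemma transfer_system_complete:
  assumes "group G"
  shows "transfer_system G (complete_transfer G)"
proof (rule transfer_systemI)
  fix K H L assume "complete_transfer G K H" "subgroup L G"
  then show "complete_transfer G (K \<inter> L) (H \<inter> L)"
    unfolding complete_transfer_def using group.subgroups_Inter_pair[OF assms] by blast
next
  fix K H g assume "complete_transfer G K H" "g \<in> carrier G"
  then show "complete_transfer G (conjugate_set G g K) (conjugate_set G g H)"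
    unfolding complete_transfer_def by (simp add: subgroup_conjugate_set[OF assms] conjugate_set_mono)
qed (auto simp: complete_transfer_def)

lemma saturated_complete: "saturated G (complete_transfer G)"
  by (rule saturatedI) (simp add: complete_transfer_def)

lemma hull_least: "transfer_system G S \<Longrightarrow> saturated G S \<Longrightarrow> (\<And>A B. R A B \<Longrightarrow> S A B)
    \<Longrightarrow> hull G R K H \<Longrightarrow> S K H"
  unfolding hull_def by blast

lemma hull_le_complete:
  assumes "group G" "transfer_system G T" "hull G T K H"
  shows "complete_transfer G K H"
  using hull_least[OF transfer_system_complete[OF assms(1)] saturated_complete
      transfer_system_le_complete[OF assms(2)] assms(3)] .

definition same_component :: "('a \<Rightarrow> 'a \<Rightarrow> bool) \<Rightarrow> 'a \<Rightarrow> 'a \<Rightarrow> bool" where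
  "same_component R = (\<lambda>x y. R x y \<or> R y x)\<^sup>*\<^sup>*"

lemma connected_transfer_iff:
  "connected_transfer G T \<longleftrightarrow> (\<forall>K H. subgroup K G \<and> subgroup H G \<longrightarrow> same_component T K H)"
  unfolding connected_transfer_def same_component_def ..

lemma same_component_refl [simp]: "same_component R x x"
  unfolding same_component_def by simp

lemma same_component_sym: "same_component R x y \<Longrightarrow> same_component R y x"
  unfolding same_component_def by (rule symp_rtranclp[THEN sympD]) (auto intro: sympI)

lemma same_component_trans:
  "same_component R x y \<Longrightarrow> same_component R y z \<Longrightarrow> same_component R x z"
  unfolding same_component_def by (rule rtranclp_trans)

lemma same_component_map:
  assumes "\<And>x y. R x y \<Longrightarrow> R (f x) (f y)" and "same_component R x y"
  shows "same_component R (f x) (f y)"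
  using assms(2) unfolding same_component_def
proof (induction rule: rtranclp_induct)
  case (step y z)
  then have "R (f y) (f z) \<or> R (f z) (f y)" using assms(1) by blast
  with step.IH show ?case by (rule rtranclp.rtrancl_into_rtrancl)
qed simp

lemma same_component_restrict:
  "transfer_system G T \<Longrightarrow> subgroup L G \<Longrightarrow> same_component T K H
    \<Longrightarrow> same_component T (K \<inter> L) (H \<inter> L)"
  by (rule same_component_map[of T "\<lambda>X. X \<inter> L"]) (rule transfer_system_restrict)

lemma same_component_conjugate:
  "transfer_system G T \<Longrightarrow> g \<in> carrier G \<Longrightarrow> same_component T K H
    \<Longrightarrow> same_component T (conjugate_set G g K) (conjugate_set G g H)"
  by (rule same_component_map[of T "conjugate_set G g"]) (rule transfer_system_conjugate)

definition component_transfer ::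
    "('a, 'b) monoid_scheme \<Rightarrow> ('a set \<Rightarrow> 'a set \<Rightarrow> bool) \<Rightarrow> 'a set \<Rightarrow> 'a set \<Rightarrow> bool" where
  "component_transfer G T K H \<longleftrightarrow> complete_transfer G K H \<and> same_component T K H"

lemma transfer_system_component:
  assumes "group G" "transfer_system G T"
  shows "transfer_system G (component_transfer G T)"
proof -
  note complete = transfer_system_complete[OF assms(1)]
  show ?thesis
  proof (rule transfer_systemI)
    fix K H assume "component_transfer G T K H"
    then show "subgroup K G \<and> subgroup H G \<and> K \<subseteq> H"
      unfolding component_transfer_def complete_transfer_def by blast
  next
    fix L K H assume "component_transfer G T L K" "component_transfer G T K H"
    then show "component_transfer G T L H"
      unfolding component_transfer_def
      by (meson transfer_system_trans[OF complete] same_component_trans)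
  next
    fix K H L assume "component_transfer G T K H" "subgroup L G"
    then show "component_transfer G T (K \<inter> L) (H \<inter> L)"
      unfolding component_transfer_def
      using transfer_system_restrict[OF complete] same_component_restrict[OF assms(2)] by blast
  next
    fix K H g assume "component_transfer G T K H" "g \<in> carrier G"
    then show "component_transfer G T (conjugate_set G g K) (conjugate_set G g H)"
      unfolding component_transfer_def
      using transfer_system_conjugate[OF complete] same_component_conjugate[OF assms(2)] by blast
  qed (auto simp: component_transfer_def complete_transfer_def)
qed

lemma saturated_component:
  assumes "transfer_system G T"
  shows "saturated G (component_transfer G T)"
proof (rule saturatedI)
  fix L K H
  assume subgroups: "subgroup L G" "subgroup K G" "subgroup H G"
    and "L \<subseteq> K" "K \<subseteq> H" and LH: "component_transfer G T L H"
  have "same_component T (L \<inter> K) (H \<inter> K)"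
    using LH subgroups(2) same_component_restrict[OF assms] unfolding component_transfer_def by blast
  moreover have "L \<inter> K = L" "H \<inter> K = K" using \<open>L \<subseteq> K\<close> \<open>K \<subseteq> H\<close> by auto
  ultimately have "same_component T K L" by (simp add: same_component_sym)
  with LH have "same_component T K H"
    unfolding component_transfer_def by (meson same_component_trans)
  then show "component_transfer G T K H"
    using subgroups \<open>K \<subseteq> H\<close> unfolding component_transfer_def complete_transfer_def by blast
qed

lemma hull_same_component:
  assumes "group G" "transfer_system G T" "hull G T K H"
  shows "same_component T K H"
proof -
  have "component_transfer G T K H"
  proof (rule hull_least[OF transfer_system_component[OF assms(1,2)] saturated_component[OF assms(2)]
        _ assms(3)])
    fix A B assume "T A B"
    then show "component_transfer G T A B"
      unfolding component_transfer_def same_component_def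
      using transfer_system_le_complete[OF assms(2)] by blast
  qed
  then show ?thesis unfolding component_transfer_def ..
qed

text \<open>Along T-edges: saturation pushes K \<rightarrow> G up an edge K \<rightarrow> K', transitivity pulls it down
  an edge K' \<rightarrow> K.\<close>

lemma saturated_transfer_to_carrier:
  assumes "group G" "transfer_system G T" "transfer_system G S" "saturated G S"
    and "\<And>A B. T A B \<Longrightarrow> S A B" and "same_component T (carrier G) K"
  shows "S K (carrier G)"
  using assms(6) unfolding same_component_def
proof (induction rule: rtranclp_induct)
  case base
  show ?case by (rule transfer_system_refl[OF assms(3) group.subgroup_self[OF assms(1)]])
next
  case (step K K')
  from step.hyps(2) show ?case
  proof
    assume "T K K'"
    with transfer_system_subgroups[OF assms(2)] have "subgroup K G" "subgroup K' G" "K \<subseteq> K'"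
      by blast+
    then show ?thesis
      using saturatedD[OF assms(4) _ _ group.subgroup_self[OF assms(1)]] step.IH subgroup.subset
      by blast
  next
    assume "T K' K"
    then have "S K' K" by (rule assms(5))
    then show ?thesis using step.IH by (rule transfer_system_trans[OF assms(3)])
  qed
qed

lemma connected_hull_complete:
  assumes "group G" "transfer_system G T" "connected_transfer G T" "complete_transfer G K H"
  shows "hull G T K H"
  unfolding hull_def
proof (intro allI impI, elim conjE)
  fix S assume S: "transfer_system G S" "saturated G S" "\<forall>A B. T A B \<longrightarrow> S A B"
  have KH: "subgroup K G" "subgroup H G" "K \<subseteq> H"
    using assms(4) unfolding complete_transfer_def by auto
  have "same_component T (carrier G) K"
    using assms(3) KH(1) group.subgroup_self[OF assms(1)] unfolding connected_transfer_iff by blast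
  then have "S K (carrier G)"
    using saturated_transfer_to_carrier[OF assms(1,2) S(1,2)] S(3) by blast
  then have "S (K \<inter> H) (carrier G \<inter> H)"
    using transfer_system_restrict[OF S(1) _ KH(2)] by blast
  moreover have "K \<inter> H = K" "carrier G \<inter> H = H" using KH subgroup.subset by blast+
  ultimately show "S K H" by simp
qed

theorem mainTheorem3:
  fixes G :: "('a, 'b) monoid_scheme" and T :: "'a set \<Rightarrow> 'a set \<Rightarrow> bool"
  assumes "group G" and "finite (carrier G)" and "transfer_system G T"
  shows "hull G T = complete_transfer G \<longleftrightarrow> connected_transfer G T"
proof
  assume hull_complete: "hull G T = complete_transfer G"
  have to_carrier: "same_component T K (carrier G)" if "subgroup K G" for K
  proof -
    have "complete_transfer G K (carrier G)"
      using that group.subgroup_self[OF assms(1)] subgroup.subset unfolding complete_transfer_def by blast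
    then show ?thesis using hull_same_component[OF assms(1,3)] hull_complete by simp
  qed
  show "connected_transfer G T"
    unfolding connected_transfer_iff
    by (metis to_carrier same_component_sym same_component_trans)
next
  assume "connected_transfer G T"
  then show "hull G T = complete_transfer G"
    using hull_le_complete[OF assms(1,3)] connected_hull_complete[OF assms(1,3)] by blast
qed

end
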